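(* Let $\Gamma$ be a countable discrete group and $\mu$ a symmetric, generating probability measure on $\Gamma$. Assume there is a nonzero $f\in\ell^\infty(\Gamma)$ with $f*\mu=-f$. Then there exists a multiplicative character $\chi:\Gamma\to\mathbb T$ with $\chi(h)=-1$ for all $h\in\operatorname{supp}(\mu)$, hence $\chi*\mu=-\chi$. Moreover, for every $F\in\ell^\infty(\Gamma)$ with $F*\mu=-F$ there exists $f_1\in\ell^\infty(\Gamma)$ with $f_1*\mu=f_1$ such that $F=f_1\cdot\chi$ (pointwise product).
   Context: $(f*\mu)(x)=\sum_{h\in\Gamma}\mu(h)f(xh)$. $\mu$ symmetric: $\mu(g)=\mu(g^{-1})$; generating: its support generates $\Gamma$ as a group. *)

theory Defs
  imports "HOL-Analysis.Analysis" "HOL-Algebra.Generated_Groups"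
begin

definition conv_meas :: "('a, 'b) monoid_scheme \<Rightarrow> ('a \<Rightarrow> complex) \<Rightarrow> ('a \<Rightarrow> real) \<Rightarrow> 'a \<Rightarrow> complex" where
  "conv_meas G f \<mu> x = (\<Sum>\<^sub>\<infinity>h\<in>carrier G. complex_of_real (\<mu> h) * f (x \<otimes>\<^bsub>G\<^esub> h))"

definition supp_meas :: "('a, 'b) monoid_scheme \<Rightarrow> ('a \<Rightarrow> real) \<Rightarrow> 'a set" where
  "supp_meas G \<mu> = {h \<in> carrier G. \<mu> h \<noteq> 0}"

definition prob_meas :: "('a, 'b) monoid_scheme \<Rightarrow> ('a \<Rightarrow> real) \<Rightarrow> bool" where
  "prob_meas G \<mu> \<longleftrightarrow> (\<forall>h\<in>carrier G. 0 \<le> \<mu> h) \<and> (\<mu> has_sum 1) (carrier G)"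

definition symmetric_meas :: "('a, 'b) monoid_scheme \<Rightarrow> ('a \<Rightarrow> real) \<Rightarrow> bool" where
  "symmetric_meas G \<mu> \<longleftrightarrow> (\<forall>g\<in>carrier G. \<mu> g = \<mu> (inv\<^bsub>G\<^esub> g))"

definition generating_meas :: "('a, 'b) monoid_scheme \<Rightarrow> ('a \<Rightarrow> real) \<Rightarrow> bool" where
  "generating_meas G \<mu> \<longleftrightarrow> generate G (supp_meas G \<mu>) = carrier G"

definition linf :: "('a, 'b) monoid_scheme \<Rightarrow> ('a \<Rightarrow> complex) \<Rightarrow> bool" where
  "linf G f \<longleftrightarrow> (\<exists>B. \<forall>x\<in>carrier G. norm (f x) \<le> B)"

definition unitary_character :: "('a, 'b) monoid_scheme \<Rightarrow> ('a \<Rightarrow> complex) \<Rightarrow> bool" where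
  "unitary_character G chi \<longleftrightarrow> (\<forall>x\<in>carrier G. norm (chi x) = 1) \<and>
     (\<forall>x\<in>carrier G. \<forall>y\<in>carrier G. chi (x \<otimes>\<^bsub>G\<^esub> y) = chi x * chi y)"

end

theory Submission
  imports Defs
begin

text \<open>
  Let \<open>M = sup |f|\<close>. Averaging \<open>f(yh)\<close> against \<open>\<mu>\<close> gives \<open>-f(y)\<close>, so if \<open>f(y)\<close> nearly
  attains modulus \<open>M\<close> in direction \<open>c\<close>, then \<open>f(ys)\<close> nearly attains \<open>M\<close> in direction
  \<open>-c\<close> for each \<open>s\<close> in the support. Right translation by a product of \<open>n\<close> support elements
  therefore moves near-maximisers in direction \<open>c\<close> to near-maximisers in direction \<open>(-1)^n c\<close>;
  since a near-maximiser cannot be one in both directions \<open>c\<close> and \<open>-c\<close>, the parity of \<open>n\<close>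
  depends only on the product. This parity is a character \<open>chi\<close> with values \<open>\<plusminus>1\<close>, equal
  to \<open>-1\<close> on the support, and multiplication by \<open>chi\<close> exchanges solutions of \<open>F*\<mu> = -F\<close> and
  of \<open>F*\<mu> = F\<close>.
\<close>

lemma has_sum_weighted_deficit:
  fixes \<mu> r :: "'a \<Rightarrow> real"
  assumes "(\<mu> has_sum 1) A" "\<forall>h\<in>A. 0 \<le> \<mu> h"
    and "((\<lambda>h. \<mu> h * r h) has_sum t) A" "\<forall>h\<in>A. r h \<le> M" "s \<in> A"
  shows "\<mu> s * (M - r s) \<le> M - t"
proof -
  have "((\<lambda>h. \<mu> h * M + - (\<mu> h * r h)) has_sum (1 * M + - t)) A"
    using has_sum_add[OF has_sum_cmult_left[OF assms(1)] has_sum_uminusI[OF assms(3)]] .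
  then have total: "((\<lambda>h. \<mu> h * (M - r h)) has_sum (M - t)) A"
    by (simp add: right_diff_distrib)
  have single: "((\<lambda>h. \<mu> h * (M - r h)) has_sum (\<mu> s * (M - r s))) {s}"
    using has_sum_finite[of "{s}"] by simp
  show ?thesis
    by (rule has_sum_mono'[OF single total]) (use assms(2,4,5) in simp_all)
qed

lemma unit_rotation_to_norm:
  fixes z :: complex
  obtains c where "norm c = 1" "c * z = complex_of_real (norm z)"
proof (cases "z = 0")
  case True
  then show ?thesis using that[of 1] by simp
next
  case False
  have "cnj z * z = complex_of_real (norm z) * complex_of_real (norm z)"
    using complex_norm_square[of z] by (simp add: power2_eq_square mult.commute)
  then show ?thesis
    using that[of "cnj z / complex_of_real (norm z)"] False
    by (simp add: norm_divide divide_simps)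
qed

lemma linf_nonzero_norm_Sup:
  assumes "linf G f" "\<exists>x\<in>carrier G. f x \<noteq> 0"
  obtains M where "M > 0" "\<forall>x\<in>carrier G. norm (f x) \<le> M"
    "\<forall>\<epsilon>>0. \<exists>x\<in>carrier G. M - \<epsilon> < norm (f x)"
proof -
  define N where "N = (\<lambda>x. norm (f x)) ` carrier G"
  obtain B where "\<forall>x\<in>carrier G. norm (f x) \<le> B"
    using assms(1) unfolding linf_def by blast
  then have bdd: "bdd_above N"
    unfolding N_def by (meson bdd_aboveI2)
  obtain x0 where x0: "x0 \<in> carrier G" "f x0 \<noteq> 0"
    using assms(2) by blast
  have ne: "N \<noteq> {}"
    using x0(1) unfolding N_def by blast
  have bound: "\<forall>x\<in>carrier G. norm (f x) \<le> Sup N"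
    using cSup_upper[OF _ bdd] unfolding N_def by blast
  have "0 < norm (f x0)"
    using x0(2) by simp
  also have "\<dots> \<le> Sup N"
    using bound x0(1) by blast
  finally have "Sup N > 0" .
  moreover have "\<exists>x\<in>carrier G. Sup N - \<epsilon> < norm (f x)" if "\<epsilon> > 0" for \<epsilon>
    using less_cSupD[OF ne, of "Sup N - \<epsilon>"] that unfolding N_def by auto
  ultimately show ?thesis
    using that bound by blast
qed

lemma supp_meas_inv_closed:
  assumes "group G" "symmetric_meas G \<mu>" "s \<in> supp_meas G \<mu>"
  shows "inv\<^bsub>G\<^esub> s \<in> supp_meas G \<mu>"
  using assms group.inv_closed unfolding symmetric_meas_def supp_meas_def by fastforce

lemma conv_meas_has_sum:
  assumes "group G" "prob_meas G \<mu>" "\<forall>y\<in>carrier G. norm (f y) \<le> B" "x \<in> carrier G"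
  shows "((\<lambda>h. complex_of_real (\<mu> h) * f (x \<otimes>\<^bsub>G\<^esub> h)) has_sum conv_meas G f \<mu> x) (carrier G)"
proof -
  have \<mu>: "\<forall>h\<in>carrier G. 0 \<le> \<mu> h" "(\<mu> has_sum 1) (carrier G)"
    using assms(2) unfolding prob_meas_def by auto
  have "(\<lambda>h. \<mu> h * B) summable_on carrier G"
    using has_sum_cmult_left[OF \<mu>(2)] unfolding summable_on_def by blast
  then have "(\<lambda>h. norm (complex_of_real (\<mu> h) * f (x \<otimes>\<^bsub>G\<^esub> h))) summable_on carrier G"
  proof (rule summable_on_comparison_test)
    fix h assume "h \<in> carrier G"
    then have "norm (f (x \<otimes>\<^bsub>G\<^esub> h)) \<le> B"
      using assms(1,3,4) by (meson group.is_monoid monoid.m_closed)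
    moreover have "0 \<le> \<mu> h"
      using \<mu>(1) \<open>h \<in> carrier G\<close> by blast
    ultimately show "norm (complex_of_real (\<mu> h) * f (x \<otimes>\<^bsub>G\<^esub> h)) \<le> \<mu> h * B"
      unfolding norm_mult norm_of_real abs_of_nonneg[OF \<open>0 \<le> \<mu> h\<close>] by (rule mult_left_mono)
  qed simp
  then show ?thesis
    unfolding conv_meas_def by (rule has_sum_infsum[OF abs_summable_summable])
qed

lemma conv_meas_const_one:
  assumes "prob_meas G \<mu>"
  shows "conv_meas G (\<lambda>_. 1) \<mu> x = 1"
proof -
  have "(\<mu> has_sum 1) (carrier G)"
    using assms unfolding prob_meas_def by blast
  from infsumI[OF has_sum_of_real[OF this]] show ?thesis
    unfolding conv_meas_def by simp
qed

lemma conv_meas_twist: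
  assumes "unitary_character G chi" "\<forall>h\<in>supp_meas G \<mu>. chi h = -1" "x \<in> carrier G"
  shows "conv_meas G (\<lambda>y. F y * chi y) \<mu> x = - chi x * conv_meas G F \<mu> x"
proof -
  have flip: "complex_of_real (\<mu> h) * (F (x \<otimes>\<^bsub>G\<^esub> h) * chi (x \<otimes>\<^bsub>G\<^esub> h))
      = - chi x * (complex_of_real (\<mu> h) * F (x \<otimes>\<^bsub>G\<^esub> h))" if "h \<in> carrier G" for h
  proof (cases "\<mu> h = 0")
    case False
    then have "chi h = -1"
      using assms(2) that unfolding supp_meas_def by blast
    then have "chi (x \<otimes>\<^bsub>G\<^esub> h) = - chi x"
      using assms(1,3) that unfolding unitary_character_def by simp
    then show ?thesis
      by simp
  qed simp
  have "conv_meas G (\<lambda>y. F y * chi y) \<mu> x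
      = (\<Sum>\<^sub>\<infinity>h\<in>carrier G. - chi x * (complex_of_real (\<mu> h) * F (x \<otimes>\<^bsub>G\<^esub> h)))"
    unfolding conv_meas_def by (rule infsum_cong) (rule flip)
  also have "\<dots> = - chi x * conv_meas G F \<mu> x"
    unfolding conv_meas_def by (rule infsum_cmult_right')
  finally show ?thesis .
qed

definition extremal_shift ::
    "('a, 'b) monoid_scheme \<Rightarrow> ('a \<Rightarrow> complex) \<Rightarrow> real \<Rightarrow> complex \<Rightarrow> 'a \<Rightarrow> bool" where
  "extremal_shift G f M \<sigma> g \<longleftrightarrow> (\<forall>\<eta>>0. \<exists>\<epsilon>>0. \<forall>x\<in>carrier G. \<forall>c. norm c = 1 \<longrightarrow>
     M - \<epsilon> \<le> Re (c * f x) \<longrightarrow> M - \<eta> \<le> Re (\<sigma> * c * f (x \<otimes>\<^bsub>G\<^esub> g)))"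

lemma extremal_shift_one:
  assumes "group G"
  shows "extremal_shift G f M 1 \<one>\<^bsub>G\<^esub>"
  unfolding extremal_shift_def
proof (intro allI impI)
  fix \<eta> :: real
  assume "\<eta> > 0"
  then show "\<exists>\<epsilon>>0. \<forall>x\<in>carrier G. \<forall>c. norm c = 1 \<longrightarrow>
      M - \<epsilon> \<le> Re (c * f x) \<longrightarrow> M - \<eta> \<le> Re (1 * c * f (x \<otimes>\<^bsub>G\<^esub> \<one>\<^bsub>G\<^esub>))"
    using assms by (auto simp: group.is_monoid monoid.r_one)
qed

lemma extremal_shift_mult:
  assumes "group G" "g \<in> carrier G" "h \<in> carrier G" "norm \<sigma> = 1"
    and "extremal_shift G f M \<sigma> g" "extremal_shift G f M \<tau> h"
  shows "extremal_shift G f M (\<sigma> * \<tau>) (g \<otimes>\<^bsub>G\<^esub> h)"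
  unfolding extremal_shift_def
proof (intro allI impI)
  fix \<eta> :: real
  assume "\<eta> > 0"
  then obtain \<epsilon>1 where \<epsilon>1: "\<epsilon>1 > 0" "\<forall>y\<in>carrier G. \<forall>c. norm c = 1 \<longrightarrow>
      M - \<epsilon>1 \<le> Re (c * f y) \<longrightarrow> M - \<eta> \<le> Re (\<tau> * c * f (y \<otimes>\<^bsub>G\<^esub> h))"
    using assms(6) unfolding extremal_shift_def by blast
  then obtain \<epsilon> where \<epsilon>: "\<epsilon> > 0" "\<forall>x\<in>carrier G. \<forall>c. norm c = 1 \<longrightarrow>
      M - \<epsilon> \<le> Re (c * f x) \<longrightarrow> M - \<epsilon>1 \<le> Re (\<sigma> * c * f (x \<otimes>\<^bsub>G\<^esub> g))"
    using assms(5) unfolding extremal_shift_def by blast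
  have "M - \<eta> \<le> Re (\<sigma> * \<tau> * c * f (x \<otimes>\<^bsub>G\<^esub> (g \<otimes>\<^bsub>G\<^esub> h)))"
    if x: "x \<in> carrier G" and c: "norm c = 1" "M - \<epsilon> \<le> Re (c * f x)" for x c
  proof -
    have "x \<otimes>\<^bsub>G\<^esub> g \<in> carrier G"
      using x assms(1,2) by (meson group.is_monoid monoid.m_closed)
    moreover have "norm (\<sigma> * c) = 1"
      using assms(4) c(1) by (simp add: norm_mult)
    moreover have "M - \<epsilon>1 \<le> Re (\<sigma> * c * f (x \<otimes>\<^bsub>G\<^esub> g))"
      using \<epsilon>(2) x c by blast
    ultimately have "M - \<eta> \<le> Re (\<tau> * (\<sigma> * c) * f ((x \<otimes>\<^bsub>G\<^esub> g) \<otimes>\<^bsub>G\<^esub> h))"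
      using \<epsilon>1(2) by blast
    moreover have "(x \<otimes>\<^bsub>G\<^esub> g) \<otimes>\<^bsub>G\<^esub> h = x \<otimes>\<^bsub>G\<^esub> (g \<otimes>\<^bsub>G\<^esub> h)"
      using x assms(1-3) by (meson group.is_monoid monoid.m_assoc)
    ultimately show ?thesis
      by (simp add: ac_simps)
  qed
  then show "\<exists>\<epsilon>>0. \<forall>x\<in>carrier G. \<forall>c. norm c = 1 \<longrightarrow>
      M - \<epsilon> \<le> Re (c * f x) \<longrightarrow> M - \<eta> \<le> Re (\<sigma> * \<tau> * c * f (x \<otimes>\<^bsub>G\<^esub> (g \<otimes>\<^bsub>G\<^esub> h)))"
    using \<epsilon>(1) by blast
qed

lemma extremal_shift_support:
  assumes "group G" "prob_meas G \<mu>" "\<forall>x\<in>carrier G. norm (f x) \<le> M"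
    and "\<forall>x\<in>carrier G. conv_meas G f \<mu> x = - f x" "s \<in> supp_meas G \<mu>"
  shows "extremal_shift G f M (-1) s"
  unfolding extremal_shift_def
proof (intro allI impI)
  fix \<eta> :: real
  assume "\<eta> > 0"
  have \<mu>: "\<forall>h\<in>carrier G. 0 \<le> \<mu> h" "(\<mu> has_sum 1) (carrier G)"
    using assms(2) unfolding prob_meas_def by auto
  have s: "s \<in> carrier G" "\<mu> s > 0"
    using assms(5) \<mu>(1) unfolding supp_meas_def by force+
  have "M - \<eta> \<le> Re (-1 * c * f (y \<otimes>\<^bsub>G\<^esub> s))"
    if y: "y \<in> carrier G" and c: "norm c = 1" "M - \<mu> s * \<eta> \<le> Re (c * f y)" for y c
  proof -
    define r where "r h = Re (- c * f (y \<otimes>\<^bsub>G\<^esub> h))" for h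
    have "((\<lambda>h. complex_of_real (\<mu> h) * f (y \<otimes>\<^bsub>G\<^esub> h)) has_sum - f y) (carrier G)"
      using conv_meas_has_sum[OF assms(1-3) y] assms(4) y by simp
    from has_sum_Re[OF has_sum_cmult_right[OF this, of "- c"]]
    have "((\<lambda>h. Re (- c * (complex_of_real (\<mu> h) * f (y \<otimes>\<^bsub>G\<^esub> h)))) has_sum Re (c * f y)) (carrier G)"
      by simp
    moreover have "Re (- c * (complex_of_real (\<mu> h) * f (y \<otimes>\<^bsub>G\<^esub> h))) = \<mu> h * r h" for h
      unfolding r_def by (simp add: algebra_simps)
    ultimately have "((\<lambda>h. \<mu> h * r h) has_sum Re (c * f y)) (carrier G)"
      by simp
    moreover have "\<forall>h\<in>carrier G. r h \<le> M"
    proof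
      fix h
      assume "h \<in> carrier G"
      then have "norm (f (y \<otimes>\<^bsub>G\<^esub> h)) \<le> M"
        using assms(1,3) y by (meson group.is_monoid monoid.m_closed)
      then show "r h \<le> M"
        unfolding r_def using complex_Re_le_cmod[of "- c * f (y \<otimes>\<^bsub>G\<^esub> h)"] c(1)
        by (simp add: norm_mult)
    qed
    ultimately have "\<mu> s * (M - r s) \<le> M - Re (c * f y)"
      using has_sum_weighted_deficit[OF \<mu>(2,1)] s(1) by blast
    also have "\<dots> \<le> \<mu> s * \<eta>"
      using c(2) by simp
    finally have "M - r s \<le> \<eta>"
      using s(2) by simp
    then show ?thesis
      unfolding r_def by simp
  qed
  then show "\<exists>\<epsilon>>0. \<forall>y\<in>carrier G. \<forall>c. norm c = 1 \<longrightarrow>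
      M - \<epsilon> \<le> Re (c * f y) \<longrightarrow> M - \<eta> \<le> Re (-1 * c * f (y \<otimes>\<^bsub>G\<^esub> s))"
    using s(2) \<open>\<eta> > 0\<close> by (intro exI[of _ "\<mu> s * \<eta>"]) auto
qed

lemma extremal_shift_opposite_signs:
  assumes "\<forall>\<epsilon>>0. \<exists>x\<in>carrier G. M - \<epsilon> < norm (f x)" "M > 0"
    and "extremal_shift G f M \<sigma> g" "extremal_shift G f M (- \<sigma>) g"
  shows False
proof -
  have "M / 2 > 0"
    using assms(2) by simp
  then obtain \<epsilon>1 where "\<epsilon>1 > 0" and \<epsilon>1: "\<forall>x\<in>carrier G. \<forall>c. norm c = 1 \<longrightarrow>
      M - \<epsilon>1 \<le> Re (c * f x) \<longrightarrow> M - M / 2 \<le> Re (\<sigma> * c * f (x \<otimes>\<^bsub>G\<^esub> g))"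
    using assms(3) unfolding extremal_shift_def by blast
  obtain \<epsilon>2 where "\<epsilon>2 > 0" and \<epsilon>2: "\<forall>x\<in>carrier G. \<forall>c. norm c = 1 \<longrightarrow>
      M - \<epsilon>2 \<le> Re (c * f x) \<longrightarrow> M - M / 2 \<le> Re (- \<sigma> * c * f (x \<otimes>\<^bsub>G\<^esub> g))"
    using assms(4) \<open>M / 2 > 0\<close> unfolding extremal_shift_def by blast
  have "min \<epsilon>1 \<epsilon>2 > 0"
    using \<open>\<epsilon>1 > 0\<close> \<open>\<epsilon>2 > 0\<close> by simp
  then obtain x where x: "x \<in> carrier G" "M - min \<epsilon>1 \<epsilon>2 < norm (f x)"
    using assms(1) by blast
  obtain c where c: "norm c = 1" "c * f x = complex_of_real (norm (f x))"
    by (rule unit_rotation_to_norm)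
  have "Re (c * f x) = norm (f x)"
    using c(2) by simp
  then have "M - \<epsilon>1 \<le> Re (c * f x)" "M - \<epsilon>2 \<le> Re (c * f x)"
    using x(2) by linarith+
  then have "M - M / 2 \<le> Re (\<sigma> * c * f (x \<otimes>\<^bsub>G\<^esub> g))" "M - M / 2 \<le> Re (- \<sigma> * c * f (x \<otimes>\<^bsub>G\<^esub> g))"
    using \<epsilon>1 \<epsilon>2 x(1) c(1) by blast+
  then show False
    using assms(2) by simp
qed

lemma extremal_shift_generate:
  assumes "group G" "S \<subseteq> carrier G" "\<forall>s\<in>S. inv\<^bsub>G\<^esub> s \<in> S"
    and "\<forall>s\<in>S. extremal_shift G f M (-1) s" "g \<in> generate G S"
  shows "\<exists>\<sigma>\<in>{1, -1}. extremal_shift G f M \<sigma> g"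
  using assms(5)
proof induction
  case one
  show ?case
    using extremal_shift_one[OF assms(1)] by blast
next
  case (incl h)
  then show ?case
    using assms(4) by blast
next
  case (inv h)
  then show ?case
    using assms(3,4) by blast
next
  case (eng h1 h2)
  then obtain \<sigma> \<tau> where sign: "\<sigma> \<in> {1, -1}" "\<tau> \<in> {1, -1}"
    and shift: "extremal_shift G f M \<sigma> h1" "extremal_shift G f M \<tau> h2"
    by blast
  have "h1 \<in> carrier G" "h2 \<in> carrier G" "norm \<sigma> = 1"
    using eng(1,2) group.generate_incl[OF assms(1,2)] sign(1) by auto
  with shift have "extremal_shift G f M (\<sigma> * \<tau>) (h1 \<otimes>\<^bsub>G\<^esub> h2)"
    using extremal_shift_mult[OF assms(1)] by blast
  moreover have "\<sigma> * \<tau> \<in> {1, -1}"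
    using sign by auto
  ultimately show ?case
    by blast
qed

lemma extremal_sign_character:
  assumes "group G" "generate G S = carrier G" "S \<subseteq> carrier G" "\<forall>s\<in>S. inv\<^bsub>G\<^esub> s \<in> S"
    and "\<forall>s\<in>S. extremal_shift G f M (-1) s"
    and "\<forall>\<epsilon>>0. \<exists>x\<in>carrier G. M - \<epsilon> < norm (f x)" "M > 0"
  obtains chi where "unitary_character G chi" "\<forall>x\<in>carrier G. chi x \<in> {1, -1}"
    "\<forall>s\<in>S. chi s = -1"
proof -
  define chi where "chi g = (if extremal_shift G f M 1 g then 1 else -1 :: complex)" for g
  have sign_eq: "\<sigma> = chi g" if "\<sigma> \<in> {1, -1}" "extremal_shift G f M \<sigma> g" for \<sigma> g
  proof (cases "\<sigma> = 1")
    case False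
    with that have "extremal_shift G f M (- 1) g"
      by auto
    then have "\<not> extremal_shift G f M 1 g"
      using extremal_shift_opposite_signs[OF assms(6,7), of 1 g] by blast
    then show ?thesis
      using False that(1) unfolding chi_def by simp
  qed (use that in \<open>simp add: chi_def\<close>)
  have shift: "extremal_shift G f M (chi g) g" "chi g \<in> {1, -1}" if "g \<in> carrier G" for g
  proof -
    have "g \<in> generate G S"
      using that assms(2) by simp
    then obtain \<sigma> where \<sigma>: "\<sigma> \<in> {1, -1}" "extremal_shift G f M \<sigma> g"
      using extremal_shift_generate[OF assms(1,3-5)] by blast
    with sign_eq[OF \<sigma>] show "extremal_shift G f M (chi g) g" "chi g \<in> {1, -1}"
      by blast+
  qed
  have "chi (g \<otimes>\<^bsub>G\<^esub> h) = chi g * chi h" if "g \<in> carrier G" "h \<in> carrier G" for g h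
  proof (rule sign_eq[symmetric])
    have "chi g \<in> {1, -1}" "chi h \<in> {1, -1}"
      using shift(2) that by blast+
    then show "chi g * chi h \<in> {1, -1}"
      by auto
    have "norm (chi g) = 1"
      using \<open>chi g \<in> {1, -1}\<close> by auto
    with shift(1) that show "extremal_shift G f M (chi g * chi h) (g \<otimes>\<^bsub>G\<^esub> h)"
      using extremal_shift_mult[OF assms(1) that] by blast
  qed
  moreover have "norm (chi x) = 1" for x
    unfolding chi_def by simp
  ultimately have "unitary_character G chi"
    unfolding unitary_character_def by blast
  moreover have "chi s = -1" if "s \<in> S" for s
  proof -
    have "extremal_shift G f M (-1) s"
      using assms(5) that by blast
    from sign_eq[OF _ this] show ?thesis
      by simp
  qed
  ultimately show ?thesis
    using that shift(2) by blast
qed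

theorem theoremB:
  fixes G :: "('a, 'b) monoid_scheme" and \<mu> :: "'a \<Rightarrow> real" and f :: "'a \<Rightarrow> complex"
  assumes "group G" and "countable (carrier G)"
    and "prob_meas G \<mu>" and "symmetric_meas G \<mu>" and "generating_meas G \<mu>"
    and "linf G f" and "\<exists>x\<in>carrier G. f x \<noteq> 0"
    and "\<forall>x\<in>carrier G. conv_meas G f \<mu> x = - f x"
  shows "\<exists>chi. unitary_character G chi \<and> (\<forall>h\<in>supp_meas G \<mu>. chi h = -1)
           \<and> (\<forall>x\<in>carrier G. conv_meas G chi \<mu> x = - chi x)
           \<and> (\<forall>F. linf G F \<and> (\<forall>x\<in>carrier G. conv_meas G F \<mu> x = - F x) \<longrightarrow>
                 (\<exists>f1. linf G f1 \<and> (\<forall>x\<in>carrier G. conv_meas G f1 \<mu> x = f1 x)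
                       \<and> (\<forall>x\<in>carrier G. F x = f1 x * chi x)))"
proof -
  obtain M where M: "M > 0" "\<forall>x\<in>carrier G. norm (f x) \<le> M"
    "\<forall>\<epsilon>>0. \<exists>x\<in>carrier G. M - \<epsilon> < norm (f x)"
    using linf_nonzero_norm_Sup[OF assms(6,7)] by blast
  have "supp_meas G \<mu> \<subseteq> carrier G"
    unfolding supp_meas_def by blast
  moreover have "\<forall>s\<in>supp_meas G \<mu>. inv\<^bsub>G\<^esub> s \<in> supp_meas G \<mu>"
    using supp_meas_inv_closed[OF assms(1,4)] by blast
  moreover have "\<forall>s\<in>supp_meas G \<mu>. extremal_shift G f M (-1) s"
    using extremal_shift_support[OF assms(1,3) M(2) assms(8)] by blast
  ultimately obtain chi where chi: "unitary_character G chi" "\<forall>x\<in>carrier G. chi x \<in> {1, -1}"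
    "\<forall>h\<in>supp_meas G \<mu>. chi h = -1"
    using extremal_sign_character[OF assms(1) assms(5)[unfolded generating_meas_def] _ _ _ M(3,1)]
    by blast
  note twist = conv_meas_twist[OF chi(1,3)]
  have "linf G (\<lambda>x. F x * chi x) \<and> (\<forall>x\<in>carrier G. conv_meas G (\<lambda>x. F x * chi x) \<mu> x = F x * chi x)
      \<and> (\<forall>x\<in>carrier G. F x = F x * chi x * chi x)"
    if "linf G F" "\<forall>x\<in>carrier G. conv_meas G F \<mu> x = - F x" for F
    using that twist chi(1,2) unfolding linf_def unitary_character_def by (auto simp: norm_mult)
  moreover have "conv_meas G chi \<mu> x = - chi x" if "x \<in> carrier G" for x
    using twist[OF that, of "\<lambda>_. 1"] conv_meas_const_one[OF assms(3)] by simp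
  ultimately show ?thesis
    using chi(1,3) by blast
qed

end
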